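(* Let $L\ge 6$ be even, let $\eta\in V_{\mathrm{o}}$ and let $\ell_1,\ell_2$ be integers with $0\le \ell_1,\ell_2\le L$. Then: (i) If $\max\{\ell_1,\ell_2\}\le L-2$ and $\min\{\ell_1,\ell_2\}\ge L/2$, then the complement $V\setminus\mathcal{R}_{\ell_1,\ell_2}(\eta)$ is a rhombus $\mathcal{R}_{L-\ell_1-1,L-\ell_2-1}(\hat\eta)$ for some $\hat\eta\in V_{\mathrm{e}}$. (ii) If $\max\{\ell_1,\ell_2\}=L-1$ and $\min\{\ell_1,\ell_2\}\ge L/2$, then $V\setminus\mathcal{R}_{\ell_1,\ell_2}(\eta)$ is the disjoint union of $L-\min\{\ell_1,\ell_2\}$ odd sites. (iii) If $\max\{\ell_1,\ell_2\}=L$ and $\min\{\ell_1,\ell_2\}<L/2$, then $\mathcal{R}_{\ell_1,\ell_2}(\eta)$ contains exactly $L\min\{\ell_1,\ell_2\}$ odd sites and $L(\min\{\ell_1,\ell_2\}+1)$ even sites. (iv) If $\max\{\ell_1,\ell_2\}=L$ and $\min\{\ell_1,\ell_2\}\ge L/2$, then $\mathcal{R}_{\ell_1,\ell_2}(\eta)=V$.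
   Context: $L\ge 6$ is an even integer and $\Lambda=(V,E)$ is the $L\times L$ toric grid graph: $V=\{0,\dots,L-1\}^2$, two sites are adjacent iff they differ by $\pm1$ modulo $L$ in exactly one coordinate; all coordinate arithmetic is modulo $L$. A site is even (odd) if the sum of its coordinates is even (odd); $V_{\mathrm{e}}$, $V_{\mathrm{o}}$ denote the sets of even and odd sites. For $S\subseteq V$, $\partial^+S$ is the set of sites not in $S$ adjacent to some site of $S$. For a reference site $\eta=(\eta_1,\eta_2)$ and positive integers $\ell_1,\ell_2\le L$, set $S_{\ell_1,\ell_2}(\eta)=\{(\eta_1+k+j,\ \eta_2+k-j): 0\le k\le \ell_1-1,\ 0\le j\le \ell_2-1\}$ and define the rhombus $\mathcal{R}_{\ell_1,\ell_2}(\eta)=S_{\ell_1,\ell_2}(\eta)\cup\partial^+S_{\ell_1,\ell_2}(\eta)$. When $\eta\in V_{\mathrm{o}}$, $S_{\ell_1,\ell_2}(\eta)$ consists of odd sites and its boundary of even sites; when $\eta\in V_{\mathrm{e}}$ (as in (i)) the same formula defines a rhombus whose set $S$ consists of even sites and whose boundary consists of odd sites. *)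

theory Defs
  imports Main
begin

type_synonym site = "int \<times> int"

definition sites :: "int \<Rightarrow> site set" where
  "sites L = {0..<L} \<times> {0..<L}"

definition even_sites :: "int \<Rightarrow> site set" where
  "even_sites L = {v \<in> sites L. even (fst v + snd v)}"

definition odd_sites :: "int \<Rightarrow> site set" where
  "odd_sites L = {v \<in> sites L. odd (fst v + snd v)}"

definition adj :: "int \<Rightarrow> site \<Rightarrow> site \<Rightarrow> bool" where
  "adj L x y \<longleftrightarrow> x \<in> sites L \<and> y \<in> sites L \<and>
     ((fst x = fst y \<and> (snd y = (snd x + 1) mod L \<or> snd y = (snd x - 1) mod L)) \<or>
      (snd x = snd y \<and> (fst y = (fst x + 1) mod L \<or> fst y = (fst x - 1) mod L)))"

definition outer_boundary :: "int \<Rightarrow> site set \<Rightarrow> site set" where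
  "outer_boundary L S = {v \<in> sites L. v \<notin> S \<and> (\<exists>s\<in>S. adj L s v)}"

definition Sset :: "int \<Rightarrow> int \<Rightarrow> int \<Rightarrow> site \<Rightarrow> site set" where
  "Sset L l1 l2 \<eta> = {((fst \<eta> + k + j) mod L, (snd \<eta> + k - j) mod L) | k j.
       0 \<le> k \<and> k \<le> l1 - 1 \<and> 0 \<le> j \<and> j \<le> l2 - 1}"

definition rhombus :: "int \<Rightarrow> int \<Rightarrow> int \<Rightarrow> site \<Rightarrow> site set" where
  "rhombus L l1 l2 \<eta> = Sset L l1 l2 \<eta> \<union> outer_boundary L (Sset L l1 l2 \<eta>)"

end

(* Parametrise the torus by the chart (k, j) |-> e + k (1, 1) + j (1, -1) mod L.  For an odd base e
   it covers the odd sites, and based at the east neighbour of e it covers the even sites; the set S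
   of the rhombus is the image of the box [0, l1) x [0, l2), its outer boundary the image of
   [-1, l1) x [-1, l2) under the even chart.  For L = 2 m the chart identifies (k, j) with
   (k, j) + m (s, t) exactly when s + t is even, so [a, a + 2 m) x [b, b + m) is a fundamental domain.
   A box with sides between m and 2 m wraps once around the torus and leaves uncovered exactly the
   box [a + l1, a + 2 m) x [b + l2 - m, b + m); doing this in both parity classes gives (i) and (ii).
   In (iii) the boxes fit into a fundamental domain, so counting sites is counting parameters, and in
   (iv) they contain one.  Exchanging l1 and l2 amounts to reflecting the torus in the horizontal
   line through e, which reduces the remaining cases to l2 <= l1. *)

theory Submission
  imports Defs
begin

definition chart :: "int \<Rightarrow> site \<Rightarrow> int \<times> int \<Rightarrow> site" where
  "chart L e p = ((fst e + fst p + snd p) mod L, (snd e + fst p - snd p) mod L)"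

definition east :: "site \<Rightarrow> site" where
  "east e = (fst e + 1, snd e)"

lemma chart_in_sites: "0 < L \<Longrightarrow> chart L e p \<in> sites L"
  unfolding chart_def sites_def by auto

lemma even_chart_iff:
  assumes "even L"
  shows "even (fst (chart L e p) + snd (chart L e p)) \<longleftrightarrow> even (fst e + snd e)"
proof -
  have even_mod: "even (a mod L) \<longleftrightarrow> even a" for a
    using assms by (metis dvd_mod_iff)
  have "even (fst (chart L e p) + snd (chart L e p)) \<longleftrightarrow>
        even ((fst e + fst p + snd p) + (snd e + fst p - snd p))"
    unfolding chart_def by (simp only: fst_conv snd_conv even_add even_mod)
  also have "\<dots> \<longleftrightarrow> even (fst e + snd e)" by (simp add: even_add)
  finally show ?thesis .
qed

lemma range_chart:
  assumes "even L" "0 < L"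
  shows "range (chart L e) = {v \<in> sites L. even (fst v + snd v) \<longleftrightarrow> even (fst e + snd e)}"
proof (intro equalityI subsetI)
  fix v assume "v \<in> range (chart L e)"
  then obtain p where "v = chart L e p" by blast
  then show "v \<in> {v \<in> sites L. even (fst v + snd v) \<longleftrightarrow> even (fst e + snd e)}"
    using chart_in_sites[OF assms(2)] even_chart_iff[OF assms(1)] by simp
next
  fix v assume v: "v \<in> {v \<in> sites L. even (fst v + snd v) \<longleftrightarrow> even (fst e + snd e)}"
  obtain x y where xy: "v = (x, y)" by fastforce
  then have "even (x + y - fst e - snd e)" using v by auto
  then obtain r where r: "x + y - fst e - snd e = 2 * r" by blast
  have "chart L e (r, x - fst e - r) = v"
    using r v xy unfolding chart_def sites_def by auto
  then show "v \<in> range (chart L e)" by (metis rangeI)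
qed

lemma sites_parity_partition:
  "sites L = odd_sites L \<union> even_sites L" "odd_sites L \<inter> even_sites L = {}"
  unfolding sites_def odd_sites_def even_sites_def by auto

lemma range_chart_odd_even:
  assumes "even L" "0 < L" "e \<in> odd_sites L"
  shows "range (chart L e) = odd_sites L" "range (chart L (east e)) = even_sites L"
  using assms unfolding range_chart[OF assms(1,2)] odd_sites_def even_sites_def east_def
  by auto

lemma adj_chart:
  assumes "0 < L"
  shows "adj L (chart L e (k, j)) v \<longleftrightarrow>
    v \<in> {chart L (east e) (k, j), chart L (east e) (k - 1, j - 1),
         chart L (east e) (k, j - 1), chart L (east e) (k - 1, j)}"
proof -
  define x where "x = fst e + k + j"
  define y where "y = snd e + k - j"
  have "chart L e (k, j) = (x mod L, y mod L)"
    "chart L (east e) (k, j) = ((x + 1) mod L, y mod L)"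
    "chart L (east e) (k - 1, j - 1) = ((x - 1) mod L, y mod L)"
    "chart L (east e) (k, j - 1) = (x mod L, (y + 1) mod L)"
    "chart L (east e) (k - 1, j) = (x mod L, (y - 1) mod L)"
    unfolding chart_def east_def x_def y_def by (simp_all add: algebra_simps)
  moreover have "(x mod L, y mod L) \<in> sites L" "((x + 1) mod L, y mod L) \<in> sites L"
    "((x - 1) mod L, y mod L) \<in> sites L" "(x mod L, (y + 1) mod L) \<in> sites L"
    "(x mod L, (y - 1) mod L) \<in> sites L"
    using assms unfolding sites_def by auto
  ultimately show ?thesis
    unfolding adj_def by (cases v) (auto simp: mod_simps)
qed

lemma chart_neq_chart_east: "even L \<Longrightarrow> chart L e p \<noteq> chart L (east e) q"
  using even_chart_iff[of L e p] even_chart_iff[of L "east e" q] by (auto simp: east_def)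

lemma Sset_eq_image_chart: "Sset L l1 l2 e = chart L e ` ({0..<l1} \<times> {0..<l2})"
  unfolding Sset_def chart_def by force

lemma outer_boundary_chart_box:
  assumes "even L" "0 < L" "1 \<le> l1" "1 \<le> l2"
  shows "outer_boundary L (chart L e ` ({0..<l1} \<times> {0..<l2}))
           = chart L (east e) ` ({-1..<l1} \<times> {-1..<l2})"
proof (intro equalityI subsetI)
  fix v assume "v \<in> outer_boundary L (chart L e ` ({0..<l1} \<times> {0..<l2}))"
  then obtain k j where kj: "0 \<le> k" "k < l1" "0 \<le> j" "j < l2"
    and "adj L (chart L e (k, j)) v"
    unfolding outer_boundary_def by auto
  then have "v \<in> {chart L (east e) (k, j), chart L (east e) (k - 1, j - 1),
                   chart L (east e) (k, j - 1), chart L (east e) (k - 1, j)}"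
    using adj_chart[OF assms(2)] by blast
  then show "v \<in> chart L (east e) ` ({-1..<l1} \<times> {-1..<l2})"
    using kj by auto
next
  fix v assume "v \<in> chart L (east e) ` ({-1..<l1} \<times> {-1..<l2})"
  then obtain a b where ab: "-1 \<le> a" "a < l1" "-1 \<le> b" "b < l2"
    and v: "v = chart L (east e) (a, b)" by auto
  define k where "k = max a 0"
  define j where "j = max b 0"
  have "v \<in> {chart L (east e) (k, j), chart L (east e) (k - 1, j - 1),
              chart L (east e) (k, j - 1), chart L (east e) (k - 1, j)}"
    using ab unfolding v k_def j_def by (cases "a = -1"; cases "b = -1") auto
  then have "adj L (chart L e (k, j)) v" using adj_chart[OF assms(2)] by blast
  moreover have "chart L e (k, j) \<in> chart L e ` ({0..<l1} \<times> {0..<l2})"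
    using ab assms unfolding k_def j_def by auto
  moreover have "v \<notin> chart L e ` ({0..<l1} \<times> {0..<l2})"
    using v chart_neq_chart_east[OF assms(1), of e] by (metis imageE)
  ultimately show "v \<in> outer_boundary L (chart L e ` ({0..<l1} \<times> {0..<l2}))"
    unfolding outer_boundary_def using v chart_in_sites[OF assms(2)] by blast
qed

lemma rhombus_eq_chart_boxes:
  assumes "even L" "0 < L" "1 \<le> l1" "1 \<le> l2"
  shows "rhombus L l1 l2 e = chart L e ` ({0..<l1} \<times> {0..<l2})
           \<union> chart L (east e) ` ({-1..<l1} \<times> {-1..<l2})"
  unfolding rhombus_def Sset_eq_image_chart outer_boundary_chart_box[OF assms] ..

lemma chart_eq_chart_iff:
  assumes L: "L = 2 * m"
  shows "chart L e (k, j) = chart L e (k', j') \<longleftrightarrow>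
           (\<exists>s t. k' = k + m * s \<and> j' = j + m * t \<and> even (s + t))"
proof -
  have "chart L e (k, j) = chart L e (k', j') \<longleftrightarrow>
          L dvd (k - k') + (j - j') \<and> L dvd (k - k') - (j - j')"
    unfolding chart_def prod.inject mod_eq_dvd_iff by (simp add: algebra_simps)
  also have "\<dots> \<longleftrightarrow> (\<exists>s t. k' = k + m * s \<and> j' = j + m * t \<and> even (s + t))"
  proof
    assume "L dvd (k - k') + (j - j') \<and> L dvd (k - k') - (j - j')"
    then obtain u w where "(k - k') + (j - j') = L * u" "(k - k') - (j - j') = L * w"
      unfolding dvd_def by blast
    then have "k' = k + m * (- u - w)" "j' = j + m * (w - u)"
      using L by (simp_all add: algebra_simps)
    then show "\<exists>s t. k' = k + m * s \<and> j' = j + m * t \<and> even (s + t)" by fastforce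
  next
    assume "\<exists>s t. k' = k + m * s \<and> j' = j + m * t \<and> even (s + t)"
    then obtain s t where "k' = k + m * s" "j' = j + m * t" "even (s + t)" by blast
    moreover from \<open>even (s + t)\<close> obtain r where "s + t = 2 * r" by (elim evenE)
    ultimately have "k' = k + m * (2 * r - t)" "j' = j + m * t" by simp_all
    then have "(k - k') + (j - j') = L * (- r)" "(k - k') - (j - j') = L * (t - r)"
      using L by (simp_all add: algebra_simps)
    then show "L dvd (k - k') + (j - j') \<and> L dvd (k - k') - (j - j')"
      by (metis dvd_triv_left)
  qed
  finally show ?thesis .
qed

lemma chart_mem_image_iff:
  assumes "L = 2 * m"
  shows "chart L e (k, j) \<in> chart L e ` A \<longleftrightarrow>
           (\<exists>s t. even (s + t) \<and> (k + m * s, j + m * t) \<in> A)"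
proof
  assume "chart L e (k, j) \<in> chart L e ` A"
  then obtain k' j' where "(k', j') \<in> A" "chart L e (k, j) = chart L e (k', j')" by auto
  then show "\<exists>s t. even (s + t) \<and> (k + m * s, j + m * t) \<in> A"
    unfolding chart_eq_chart_iff[OF assms] by auto
next
  assume "\<exists>s t. even (s + t) \<and> (k + m * s, j + m * t) \<in> A"
  then obtain s t where "even (s + t)" "(k + m * s, j + m * t) \<in> A" by blast
  moreover have "chart L e (k, j) = chart L e (k + m * s, j + m * t)"
    unfolding chart_eq_chart_iff[OF assms] using \<open>even (s + t)\<close> by blast
  ultimately show "chart L e (k, j) \<in> chart L e ` A" by blast
qed

lemma mult_bounds_cancel:
  fixes m s a b :: int
  assumes "0 < m" "a * m < m * s" "m * s < b * m"
  shows "a < s \<and> s < b"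
  using assms by (metis mult.commute mult_less_cancel_left_pos)

lemma chart_box_eq_range:
  assumes L: "L = 2 * m" "0 < m"
  shows "chart L e ` ({a..<a + L} \<times> {b..<b + m}) = range (chart L e)"
proof (intro equalityI subsetI)
  fix v assume "v \<in> range (chart L e)"
  then obtain k j where v: "v = chart L e (k, j)" by auto
  define t where "t = - ((j - b) div m)"
  define s where "s = t - 2 * ((k + m * t - a) div L)"
  have "j + m * t = b + (j - b) mod m"
    unfolding t_def by (simp add: minus_div_mult_eq_mod[symmetric] algebra_simps)
  moreover have "k + m * s = a + (k + m * t - a) mod L"
    unfolding s_def L(1) by (simp add: minus_div_mult_eq_mod[symmetric] algebra_simps)
  ultimately have "(k + m * s, j + m * t) \<in> {a..<a + L} \<times> {b..<b + m}"
    using L by auto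
  moreover have "even (s + t)" unfolding s_def by simp
  ultimately show "v \<in> chart L e ` ({a..<a + L} \<times> {b..<b + m})"
    unfolding v chart_mem_image_iff[OF L(1)] by blast
qed auto

lemma chart_image_eq_range:
  assumes "L = 2 * m" "0 < m" "{a..<a + L} \<times> {b..<b + m} \<subseteq> A"
  shows "chart L e ` A = range (chart L e)"
proof -
  have "range (chart L e) = chart L e ` ({a..<a + L} \<times> {b..<b + m})"
    by (rule chart_box_eq_range[OF assms(1,2), symmetric])
  also have "\<dots> \<subseteq> chart L e ` A" by (rule image_mono[OF assms(3)])
  finally show ?thesis by blast
qed

lemma inj_on_chart_box:
  assumes L: "L = 2 * m" "0 < m"
  shows "inj_on (chart L e) ({a..<a + L} \<times> {b..<b + m})"
proof (rule inj_onI)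
  fix p p' assume "p \<in> {a..<a + L} \<times> {b..<b + m}" "p' \<in> {a..<a + L} \<times> {b..<b + m}"
    and "chart L e p = chart L e p'"
  moreover obtain k j k' j' where p: "p = (k, j)" "p' = (k', j')" by fastforce
  ultimately have box: "(k, j) \<in> {a..<a + L} \<times> {b..<b + m}" "(k', j') \<in> {a..<a + L} \<times> {b..<b + m}"
    and "chart L e (k, j) = chart L e (k', j')" by simp_all
  then obtain s t where st: "k' = k + m * s" "j' = j + m * t" "even (s + t)"
    unfolding chart_eq_chart_iff[OF L(1)] by blast
  have "a \<le> k" "k < a + L" "b \<le> j" "j < b + m"
    "a \<le> k'" "k' < a + L" "b \<le> j'" "j' < b + m" using box by auto
  then have "-1 * m < m * t \<and> m * t < 1 * m" "-2 * m < m * s \<and> m * s < 2 * m"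
    using st L by linarith+
  then have "-1 < t \<and> t < 1" "-2 < s \<and> s < 2"
    using mult_bounds_cancel[OF L(2)] by blast+
  then have "s = 0" "t = 0" using st(3) by presburger+
  show "p = p'" using p st \<open>s = 0\<close> \<open>t = 0\<close> by simp
qed

lemma card_chart_box:
  assumes L: "L = 2 * m" "0 < m"
    and "a \<le> c" "c \<le> a + L" "b \<le> d" "d \<le> b + m"
  shows "card (chart L e ` ({a..<c} \<times> {b..<d})) = nat (c - a) * nat (d - b)"
proof -
  have "inj_on (chart L e) ({a..<c} \<times> {b..<d})"
    by (rule inj_on_subset[OF inj_on_chart_box[OF L]]) (use assms in auto)
  then show ?thesis by (simp add: card_image card_cartesian_product)
qed

lemma chart_mem_box_image_iff:
  assumes L: "L = 2 * m" "0 < m" and l: "m \<le> l1" "l1 \<le> L" "m \<le> l2" "l2 \<le> L"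
    and F: "a \<le> k" "k < a + L" "b \<le> j" "j < b + m"
  shows "chart L e (k, j) \<in> chart L e ` ({a..<a + l1} \<times> {b..<b + l2}) \<longleftrightarrow>
           k < a + l1 \<or> (a + m \<le> k \<and> j + m < b + l2)"
proof
  assume "chart L e (k, j) \<in> chart L e ` ({a..<a + l1} \<times> {b..<b + l2})"
  then obtain s t where st: "even (s + t)" "a \<le> k + m * s" "k + m * s < a + l1"
    "b \<le> j + m * t" "j + m * t < b + l2"
    unfolding chart_mem_image_iff[OF L(1)] by auto
  have "-2 * m < m * s \<and> m * s < 2 * m" "-1 * m < m * t \<and> m * t < 2 * m"
    using st F l L by linarith+
  then have "-2 < s \<and> s < 2" "-1 < t \<and> t < 2"
    using mult_bounds_cancel[OF L(2)] by blast+
  \<comment> \<open>only these translations can move a point of the fundamental domain into the box\<close>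
  then have "(s = 0 \<and> t = 0) \<or> (s = 1 \<and> t = 1) \<or> (s = -1 \<and> t = 1)"
    using st(1) by presburger
  then show "k < a + l1 \<or> (a + m \<le> k \<and> j + m < b + l2)"
    using st L by auto
next
  assume "k < a + l1 \<or> (a + m \<le> k \<and> j + m < b + l2)"
  then have "(k + m * 0, j + m * 0) \<in> {a..<a + l1} \<times> {b..<b + l2} \<or>
             (k + m * (-1), j + m * 1) \<in> {a..<a + l1} \<times> {b..<b + l2}"
    using F l L by auto
  moreover have "even (0 + 0 :: int)" "even (-1 + 1 :: int)" by simp_all
  ultimately show "chart L e (k, j) \<in> chart L e ` ({a..<a + l1} \<times> {b..<b + l2})"
    unfolding chart_mem_image_iff[OF L(1)] by blast
qed

lemma chart_box_complement:
  assumes L: "L = 2 * m" "0 < m" and l: "m \<le> l1" "l1 \<le> L" "m \<le> l2" "l2 \<le> L"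
  shows "chart L e ` ({a + l1..<a + L} \<times> {b + l2 - m..<b + m})
           = range (chart L e) - chart L e ` ({a..<a + l1} \<times> {b..<b + l2})"
proof (rule set_eqI)
  fix v
  show "v \<in> chart L e ` ({a + l1..<a + L} \<times> {b + l2 - m..<b + m}) \<longleftrightarrow>
        v \<in> range (chart L e) - chart L e ` ({a..<a + l1} \<times> {b..<b + l2})"
  proof (cases "v \<in> range (chart L e)")
    case True
    then obtain k j where v: "v = chart L e (k, j)"
      and F: "(k, j) \<in> {a..<a + L} \<times> {b..<b + m}"
      unfolding chart_box_eq_range[OF L, symmetric, of e a b] by auto
    have "{a + l1..<a + L} \<times> {b + l2 - m..<b + m} \<subseteq> {a..<a + L} \<times> {b..<b + m}"
      using l by auto
    then have "v \<in> chart L e ` ({a + l1..<a + L} \<times> {b + l2 - m..<b + m}) \<longleftrightarrow>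
                 (k, j) \<in> {a + l1..<a + L} \<times> {b + l2 - m..<b + m}"
      unfolding v using inj_on_image_mem_iff[OF inj_on_chart_box[OF L] F] by blast
    moreover have "v \<in> chart L e ` ({a..<a + l1} \<times> {b..<b + l2}) \<longleftrightarrow>
                     k < a + l1 \<or> (a + m \<le> k \<and> j + m < b + l2)"
      unfolding v using chart_mem_box_image_iff[OF L l] F by simp
    ultimately show ?thesis using True F l by auto
  qed auto
qed

lemma chart_chart: "chart L (chart L e (c, d)) (k, j) = chart L e (c + k, d + j)"
  unfolding chart_def fst_conv snd_conv add.assoc add_diff_eq[symmetric] mod_add_left_eq
  by (simp add: algebra_simps)

lemma chart_east_chart_east:
  "chart L (east (chart L (east e) (c, d))) (k, j) = chart L e (c + 1 + k, d + 1 + j)"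
  unfolding chart_def east_def fst_conv snd_conv add.assoc add_diff_eq[symmetric] mod_add_left_eq
  by (simp add: algebra_simps)

lemma chart_add_period: "chart L e (k + L, j) = chart L e (k, j)"
proof -
  have "fst e + (k + L) + j = (fst e + k + j) + L" "snd e + (k + L) - j = (snd e + k - j) + L"
    by simp_all
  then show ?thesis unfolding chart_def fst_conv snd_conv by (simp only: mod_add_self2)
qed

lemma image_chart_box_translate:
  assumes "\<And>k j. chart L e' (k, j) = chart L e (c + k, d + j)"
  shows "chart L e' ` ({a..<b} \<times> {a'..<b'}) = chart L e ` ({c + a..<c + b} \<times> {d + a'..<d + b'})"
proof -
  have box: "(\<lambda>(k, j). (c + k, d + j)) ` ({a..<b} \<times> {a'..<b'})
              = {c + a..<c + b} \<times> {d + a'..<d + b'}"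
    using image_paired_Times[of "plus c" "plus d"] by (simp add: add.commute)
  show ?thesis
    unfolding box[symmetric] image_image by (rule image_cong) (auto simp: assms)
qed

lemma rhombus_subset_sites:
  assumes "even L" "0 < L" "1 \<le> l1" "1 \<le> l2"
  shows "rhombus L l1 l2 e \<subseteq> sites L"
  using chart_in_sites[OF assms(2)] unfolding rhombus_eq_chart_boxes[OF assms] by blast

lemma rhombus_inter_parity_sites:
  assumes "even L" "0 < L" "e \<in> odd_sites L" "1 \<le> l1" "1 \<le> l2"
  shows "rhombus L l1 l2 e \<inter> odd_sites L = chart L e ` ({0..<l1} \<times> {0..<l2})"
    and "rhombus L l1 l2 e \<inter> even_sites L = chart L (east e) ` ({-1..<l1} \<times> {-1..<l2})"
    and "sites L - rhombus L l1 l2 e =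
           (range (chart L e) - chart L e ` ({0..<l1} \<times> {0..<l2})) \<union>
           (range (chart L (east e)) - chart L (east e) ` ({-1..<l1} \<times> {-1..<l2}))"
  using sites_parity_partition[of L]
  unfolding rhombus_eq_chart_boxes[OF assms(1,2,4,5)] range_chart_odd_even[OF assms(1-3), symmetric]
  by blast+

lemma complement_rhombus_eq_rhombus:
  assumes L: "L = 2 * m" "0 < m" and e: "e \<in> odd_sites L"
    and l: "m \<le> l1" "l1 \<le> L - 2" "m \<le> l2" "l2 \<le> L - 2"
  shows "sites L - rhombus L l1 l2 e
           = rhombus L (L - l1 - 1) (L - l2 - 1) (chart L (east e) (l1, l2 - m))"
proof -
  have L': "even L" "0 < L" using L by auto
  have l': "1 \<le> L - l1 - 1" "1 \<le> L - l2 - 1" using l by auto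
  have "sites L - rhombus L l1 l2 e =
          chart L e ` ({l1..<L} \<times> {l2 - m..<m}) \<union>
          chart L (east e) ` ({l1..<L - 1} \<times> {l2 - m..<m - 1})"
    using rhombus_inter_parity_sites(3)[OF L' e] chart_box_complement[OF L, of l1 l2 e 0 0]
      chart_box_complement[OF L, of "l1 + 1" "l2 + 1" "east e" "-1" "-1"] l L
    by (simp add: algebra_simps)
  also have "\<dots> = rhombus L (L - l1 - 1) (L - l2 - 1) (chart L (east e) (l1, l2 - m))"
    using l L unfolding rhombus_eq_chart_boxes[OF L' l']
      image_chart_box_translate[OF chart_east_chart_east] image_chart_box_translate[OF chart_chart]
    by (simp add: algebra_simps Un_commute)
  finally show ?thesis .
qed

lemma complement_rhombus_almost_full_width:
  assumes L: "L = 2 * m" "0 < m" and e: "e \<in> odd_sites L" and l: "m \<le> l2" "l2 \<le> L - 1"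
  shows "sites L - rhombus L (L - 1) l2 e = chart L e ` ({L - 1..<L} \<times> {l2 - m..<m})"
proof -
  have L': "even L" "0 < L" using L by auto
  have l': "1 \<le> L - 1" "1 \<le> l2" using L l by auto
  have "chart L (east e) ` ({-1..<L - 1} \<times> {-1..<l2}) = range (chart L (east e))"
    by (rule chart_image_eq_range[OF L, of "-1" "-1"]) (use l in auto)
  moreover have "range (chart L e) - chart L e ` ({0..<L - 1} \<times> {0..<l2})
                   = chart L e ` ({L - 1..<L} \<times> {l2 - m..<m})"
    using chart_box_complement[OF L, of "L - 1" l2 e 0 0] l L by simp
  ultimately show ?thesis
    unfolding rhombus_inter_parity_sites(3)[OF L' e l'] by simp
qed

lemma chart_image_wrap:
  "chart L e ` ({-1..<L} \<times> B) = chart L e ` ({0..<L} \<times> B)" if "0 < L"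
proof -
  have "chart L e (-1, j) = chart L e (L - 1, j)" for j
    using chart_add_period[of L e "-1" j] by simp
  then have "chart L e ` ({-1} \<times> B) \<subseteq> chart L e ` ({0..<L} \<times> B)"
    using that by force
  moreover have "{-1..<L} \<times> B = {-1} \<times> B \<union> {0..<L} \<times> B" using that by auto
  ultimately show ?thesis by blast
qed

lemma card_rhombus_full_width:
  assumes L: "L = 2 * m" "0 < m" and e: "e \<in> odd_sites L" and l: "1 \<le> l2" "l2 < m"
  shows "int (card (rhombus L L l2 e \<inter> odd_sites L)) = L * l2"
    and "int (card (rhombus L L l2 e \<inter> even_sites L)) = L * (l2 + 1)"
proof -
  have L': "even L" "0 < L" and l': "1 \<le> L" "1 \<le> l2" using L l by auto
  have "card (chart L e ` ({0..<L} \<times> {0..<l2})) = nat L * nat l2"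
    using card_chart_box[OF L, of 0 L 0 l2] l L by simp
  then show "int (card (rhombus L L l2 e \<inter> odd_sites L)) = L * l2"
    unfolding rhombus_inter_parity_sites(1)[OF L' e l'] using l L by simp
  have "card (chart L (east e) ` ({0..<L} \<times> {-1..<l2})) = nat L * nat (l2 + 1)"
    using card_chart_box[OF L, of 0 L "-1" l2] l L by simp
  then show "int (card (rhombus L L l2 e \<inter> even_sites L)) = L * (l2 + 1)"
    unfolding rhombus_inter_parity_sites(2)[OF L' e l'] chart_image_wrap[OF L'(2)]
    using l L by simp
qed

lemma rhombus_full_width_eq_sites:
  assumes L: "L = 2 * m" "0 < m" and e: "e \<in> odd_sites L" and l: "m \<le> l2" "l2 \<le> L"
  shows "rhombus L L l2 e = sites L"
proof -
  have L': "even L" "0 < L" and l': "1 \<le> L" "1 \<le> l2" using L l by auto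
  have "chart L e ` ({0..<L} \<times> {0..<l2}) = range (chart L e)"
    by (rule chart_image_eq_range[OF L, of 0 0]) (use l in auto)
  moreover have "chart L (east e) ` ({-1..<L} \<times> {-1..<l2}) = range (chart L (east e))"
    by (rule chart_image_eq_range[OF L, of "-1" "-1"]) (use l in auto)
  ultimately show ?thesis
    unfolding rhombus_eq_chart_boxes[OF L' l'] range_chart_odd_even[OF L' e] sites_parity_partition
    by simp
qed

definition reflect :: "int \<Rightarrow> int \<Rightarrow> site \<Rightarrow> site" where
  "reflect L c v = (fst v, (2 * c - snd v) mod L)"

lemma chart_swap: "chart L e (j, k) = reflect L (snd e) (chart L e (k, j))"
proof -
  have "(2 * snd e - (snd e + k - j) mod L) mod L = (snd e + j - k) mod L"
    unfolding mod_diff_right_eq by (simp add: algebra_simps)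
  then show ?thesis unfolding chart_def reflect_def fst_conv snd_conv by (simp add: ac_simps)
qed

lemma rhombus_swap:
  assumes "even L" "0 < L" "1 \<le> l1" "1 \<le> l2"
  shows "rhombus L l2 l1 e = reflect L (snd e) ` rhombus L l1 l2 e"
proof -
  have swap: "chart L e' ` (B \<times> A) = reflect L (snd e') ` chart L e' ` (A \<times> B)" for e' A B
  proof -
    have "chart L e' ` (prod.swap ` (A \<times> B)) = reflect L (snd e') ` chart L e' ` (A \<times> B)"
      unfolding image_image by (rule image_cong[OF refl]) (clarsimp, rule chart_swap)
    then show ?thesis by (simp only: product_swap)
  qed
  have "snd (east e) = snd e" by (simp add: east_def)
  then show ?thesis
    unfolding rhombus_eq_chart_boxes[OF assms] rhombus_eq_chart_boxes[OF assms(1,2,4,3)] image_Un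
      swap[of e "{0..<l2}" "{0..<l1}"] swap[of "east e" "{-1..<l2}" "{-1..<l1}"] by simp
qed

lemma reflect_reflect: "v \<in> sites L \<Longrightarrow> reflect L c (reflect L c v) = v"
  unfolding reflect_def sites_def by (auto simp: mod_diff_right_eq)

lemma reflect_in_sites: "v \<in> sites L \<Longrightarrow> reflect L c v \<in> sites L"
  unfolding reflect_def sites_def by auto

lemma bij_betw_reflect: "bij_betw (reflect L c) (sites L) (sites L)"
  by (rule bij_betw_byWitness[of _ "reflect L c"]) (auto simp: reflect_reflect reflect_in_sites)

lemma reflect_mem_parity_sites_iff:
  assumes "even L" "v \<in> sites L"
  shows "reflect L c v \<in> odd_sites L \<longleftrightarrow> v \<in> odd_sites L"
    and "reflect L c v \<in> even_sites L \<longleftrightarrow> v \<in> even_sites L"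
proof -
  have "even ((2 * c - snd v) mod L) \<longleftrightarrow> even (snd v)"
    using assms(1) by (simp add: dvd_mod_iff)
  then show "reflect L c v \<in> odd_sites L \<longleftrightarrow> v \<in> odd_sites L"
    and "reflect L c v \<in> even_sites L \<longleftrightarrow> v \<in> even_sites L"
    using reflect_in_sites[OF assms(2)] assms(2)
    unfolding odd_sites_def even_sites_def reflect_def by auto
qed

lemma sites_diff_reflect_image:
  "S \<subseteq> sites L \<Longrightarrow> sites L - reflect L c ` S = reflect L c ` (sites L - S)"
  using bij_betw_reflect[of L c] inj_on_image_set_diff[of "reflect L c" "sites L" "sites L" S]
  unfolding bij_betw_def by simp

lemma card_reflect_image: "S \<subseteq> sites L \<Longrightarrow> card (reflect L c ` S) = card S"
  using bij_betw_reflect[of L c] unfolding bij_betw_def by (metis card_image inj_on_subset)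

lemma reflect_image_inter_parity_sites:
  assumes "even L" "S \<subseteq> sites L"
  shows "reflect L c ` S \<inter> odd_sites L = reflect L c ` (S \<inter> odd_sites L)"
    and "reflect L c ` S \<inter> even_sites L = reflect L c ` (S \<inter> even_sites L)"
  using reflect_mem_parity_sites_iff[OF assms(1)] assms(2) by auto

lemma complement_rhombus_almost_full_odd_card:
  assumes L: "L = 2 * m" "0 < m" and e: "e \<in> odd_sites L"
    and l: "max l1 l2 = L - 1" "m \<le> min l1 l2"
  shows "sites L - rhombus L l1 l2 e \<subseteq> odd_sites L \<and>
         int (card (sites L - rhombus L l1 l2 e)) = L - min l1 l2"
proof -
  have L': "even L" "0 < L" using L by auto
  have almost_full: "sites L - rhombus L (L - 1) l e \<subseteq> odd_sites L \<and>
              int (card (sites L - rhombus L (L - 1) l e)) = L - l"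
    if "m \<le> l" "l \<le> L - 1" for l
  proof -
    have "chart L e ` ({L - 1..<L} \<times> {l - m..<m}) \<subseteq> odd_sites L"
      using range_chart_odd_even(1)[OF L' e] by auto
    moreover have "card (chart L e ` ({L - 1..<L} \<times> {l - m..<m})) = nat (L - l)"
      using card_chart_box[OF L, of "L - 1" L "l - m" m] that L by simp
    ultimately show ?thesis unfolding complement_rhombus_almost_full_width[OF L e that] using that by simp
  qed
  show ?thesis
  proof (cases "l1 = L - 1")
    case True
    moreover have "l2 \<le> max l1 l2" by simp
    ultimately show ?thesis using almost_full[of l2] l by (simp add: min_absorb2)
  next
    case False
    then have l': "l2 = L - 1" "m \<le> l1" "l1 \<le> L - 1"
      using l by (auto simp: max_def min_def split: if_splits)
    define S where "S = sites L - rhombus L (L - 1) l1 e"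
    have "S \<subseteq> sites L" unfolding S_def by blast
    have "rhombus L (L - 1) l1 e \<subseteq> sites L" by (rule rhombus_subset_sites) (use L l' in auto)
    moreover have "rhombus L l1 l2 e = reflect L (snd e) ` rhombus L (L - 1) l1 e"
      unfolding l'(1) by (rule rhombus_swap) (use L l' in auto)
    ultimately have "sites L - rhombus L l1 l2 e = reflect L (snd e) ` S"
      unfolding S_def using sites_diff_reflect_image by simp
    moreover have S: "S \<subseteq> odd_sites L" "int (card S) = L - l1"
      using almost_full[OF l'(2,3)] unfolding S_def by auto
    moreover have "reflect L (snd e) ` S \<subseteq> odd_sites L"
      using reflect_image_inter_parity_sites(1)[OF L'(1) \<open>S \<subseteq> sites L\<close>] S(1) by blast
    ultimately show ?thesis
      using card_reflect_image[OF \<open>S \<subseteq> sites L\<close>] l' by (simp add: min_def)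
  qed
qed

lemma card_rhombus_full_inter_parity_sites:
  assumes L: "L = 2 * m" "0 < m" and e: "e \<in> odd_sites L"
    and l: "max l1 l2 = L" "1 \<le> min l1 l2" "min l1 l2 < m"
  shows "int (card (rhombus L l1 l2 e \<inter> odd_sites L)) = L * min l1 l2 \<and>
         int (card (rhombus L l1 l2 e \<inter> even_sites L)) = L * (min l1 l2 + 1)"
proof (cases "l1 = L")
  case True
  moreover have "l2 \<le> max l1 l2" by simp
  ultimately show ?thesis using card_rhombus_full_width[OF L e, of l2] l by (simp add: min_absorb2)
next
  case False
  then have l': "l2 = L" "1 \<le> l1" "l1 < m" using l by (auto simp: max_def min_def split: if_splits)
  have L': "even L" "0 < L" using L by auto
  define R where "R = rhombus L L l1 e"
  have R: "R \<subseteq> sites L" unfolding R_def by (rule rhombus_subset_sites) (use L l' in auto)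
  have swap: "rhombus L l1 l2 e = reflect L (snd e) ` R"
    unfolding R_def l'(1) by (rule rhombus_swap) (use L l' in auto)
  have "R \<inter> odd_sites L \<subseteq> sites L" "R \<inter> even_sites L \<subseteq> sites L" using R by auto
  then have "card (reflect L (snd e) ` R \<inter> odd_sites L) = card (R \<inter> odd_sites L)"
       "card (reflect L (snd e) ` R \<inter> even_sites L) = card (R \<inter> even_sites L)"
    unfolding reflect_image_inter_parity_sites[OF L'(1) R] by (simp_all only: card_reflect_image)
  then show ?thesis
    using card_rhombus_full_width[OF L e l'(2,3)] swap l' L unfolding R_def by (simp add: min_def)
qed

lemma rhombus_full_eq_sites:
  assumes L: "L = 2 * m" "0 < m" and e: "e \<in> odd_sites L"
    and l: "max l1 l2 = L" "m \<le> min l1 l2"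
  shows "rhombus L l1 l2 e = sites L"
proof (cases "l1 = L")
  case True
  moreover have "l2 \<le> max l1 l2" by simp
  ultimately show ?thesis using rhombus_full_width_eq_sites[OF L e, of l2] l by (simp add: min_absorb2)
next
  case False
  then have l': "l2 = L" "m \<le> l1" "l1 \<le> L" using l by (auto simp: max_def min_def split: if_splits)
  have L': "even L" "0 < L" using L by auto
  have "rhombus L l1 l2 e = reflect L (snd e) ` sites L"
    using rhombus_swap[OF L', of L l1 e] rhombus_full_width_eq_sites[OF L e l'(2,3)] l' L by simp
  then show ?thesis using bij_betw_reflect unfolding bij_betw_def by simp
qed

theorem lemma3p2:
  fixes L l1 l2 :: int and \<eta> :: site
  assumes "L \<ge> 6" and "even L"
    and "\<eta> \<in> odd_sites L"
    and "1 \<le> l1" and "l1 \<le> L" and "1 \<le> l2" and "l2 \<le> L"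
  shows
   "(max l1 l2 \<le> L - 2 \<and> 2 * min l1 l2 \<ge> L \<longrightarrow>
       (\<exists>\<eta>' \<in> even_sites L.
          sites L - rhombus L l1 l2 \<eta> = rhombus L (L - l1 - 1) (L - l2 - 1) \<eta>'))
  \<and> (max l1 l2 = L - 1 \<and> 2 * min l1 l2 \<ge> L \<longrightarrow>
       sites L - rhombus L l1 l2 \<eta> \<subseteq> odd_sites L \<and>
       int (card (sites L - rhombus L l1 l2 \<eta>)) = L - min l1 l2)
  \<and> (max l1 l2 = L \<and> 2 * min l1 l2 < L \<longrightarrow>
       int (card (rhombus L l1 l2 \<eta> \<inter> odd_sites L)) = L * min l1 l2 \<and>
       int (card (rhombus L l1 l2 \<eta> \<inter> even_sites L)) = L * (min l1 l2 + 1))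
  \<and> (max l1 l2 = L \<and> 2 * min l1 l2 \<ge> L \<longrightarrow> rhombus L l1 l2 \<eta> = sites L)"
proof -
  obtain m where L: "L = 2 * m" using \<open>even L\<close> by (elim evenE)
  have m: "0 < m" using \<open>L \<ge> 6\<close> L by simp
  have half: "L \<le> 2 * min l1 l2 \<longleftrightarrow> m \<le> min l1 l2" "2 * min l1 l2 < L \<longleftrightarrow> min l1 l2 < m"
    using L by auto
  have "1 \<le> min l1 l2" using assms(4,6) by simp
  show ?thesis
    unfolding half
  proof (intro conjI impI; elim conjE)
    assume "max l1 l2 \<le> L - 2" "m \<le> min l1 l2"
    then have "sites L - rhombus L l1 l2 \<eta>
                 = rhombus L (L - l1 - 1) (L - l2 - 1) (chart L (east \<eta>) (l1, l2 - m))"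
      by (intro complement_rhombus_eq_rhombus[OF L m assms(3)]) simp_all
    moreover have "chart L (east \<eta>) (l1, l2 - m) \<in> even_sites L"
      using range_chart_odd_even(2)[of L \<eta>] assms(3) L m by auto
    ultimately show "\<exists>\<eta>' \<in> even_sites L.
                       sites L - rhombus L l1 l2 \<eta> = rhombus L (L - l1 - 1) (L - l2 - 1) \<eta>'"
      by blast
  qed (use complement_rhombus_almost_full_odd_card[OF L m assms(3)]
         card_rhombus_full_inter_parity_sites[OF L m assms(3)]
         rhombus_full_eq_sites[OF L m assms(3)] \<open>1 \<le> min l1 l2\<close> in blast)+
qed

end
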